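(* Let $n,x$ be integers with $1<x<n$, so that $G=C_{2n}(x,1,n)$ is a $5$-regular circulant graph. If $x=\tfrac{n}{2}$, then $G$ is word-representable and $R(G)\leq 5$.
   Context: Two distinct letters $x,y$ alternate in a word $w$ if, after deleting all other letters from $w$, the resulting word is of the form $xyxy\cdots$ or $yxyx\cdots$ (of even or odd length). A graph $G=(V,E)$ is word-representable if there is a word $w$ over the alphabet $V$, containing every letter of $V$ at least once, such that for all distinct $x,y\in V$, $xy\in E$ if and only if $x$ and $y$ alternate in $w$. A word is $k$-uniform if every letter occurs in it exactly $k$ times; $G$ is $k$-representable if some $k$-uniform word represents it, and the representation number $R(G)$ of a word-representable graph $G$ is the least such $k$. For an integer $m$ and a set $R$ of positive integers each at most $m/2$, the circulant graph $C_m(R)$ has vertex set $\{0,1,\dots,m-1\}$, with $i$ and $j$ adjacent iff $\min(|i-j|,\,m-|i-j|)\in R$. $C_{2n}(x,1,n)$ denotes the circulant graph on $2n$ vertices with jump set $\{1,x,n\}$; it is $5$-regular exactly when $1<x<n$. *)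

theory Defs
  imports Main
begin

definition alternates :: "'a list \<Rightarrow> 'a \<Rightarrow> 'a \<Rightarrow> bool" where
  "alternates w x y \<longleftrightarrow>
     (let u = filter (\<lambda>z. z = x \<or> z = y) w in
        \<forall>i. Suc i < length u \<longrightarrow> u ! i \<noteq> u ! Suc i)"

definition represents :: "'a set \<Rightarrow> ('a \<Rightarrow> 'a \<Rightarrow> bool) \<Rightarrow> 'a list \<Rightarrow> bool" where
  "represents V E w \<longleftrightarrow> set w = V \<and>
     (\<forall>x\<in>V. \<forall>y\<in>V. x \<noteq> y \<longrightarrow> (E x y \<longleftrightarrow> alternates w x y))"

definition word_representable :: "'a set \<Rightarrow> ('a \<Rightarrow> 'a \<Rightarrow> bool) \<Rightarrow> bool" where
  "word_representable V E \<longleftrightarrow> (\<exists>w. represents V E w)"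

definition k_uniform :: "nat \<Rightarrow> 'a list \<Rightarrow> bool" where
  "k_uniform k w \<longleftrightarrow> (\<forall>a\<in>set w. count_list w a = k)"

definition k_representable :: "nat \<Rightarrow> 'a set \<Rightarrow> ('a \<Rightarrow> 'a \<Rightarrow> bool) \<Rightarrow> bool" where
  "k_representable k V E \<longleftrightarrow> (\<exists>w. k_uniform k w \<and> represents V E w)"

definition rep_number :: "'a set \<Rightarrow> ('a \<Rightarrow> 'a \<Rightarrow> bool) \<Rightarrow> nat" where
  "rep_number V E = (LEAST k. k_representable k V E)"

definition circ_vertices :: "nat \<Rightarrow> nat set" where
  "circ_vertices m = {0..<m}"

definition circ_adj :: "nat \<Rightarrow> nat set \<Rightarrow> nat \<Rightarrow> nat \<Rightarrow> bool" where
  "circ_adj m R i j \<longleftrightarrow> i < m \<and> j < m \<and>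
     (let d = (if i \<le> j then j - i else i - j) in min d (m - d) \<in> R)"

end

theory Submission
  imports Defs
begin

(* The witness is a word made of 4x blocks, block u reading u, u+x, u+2x, u-1, u+3x (mod 4x), so
   every letter occurs once in each of the five slots and the word is 5-uniform.  Rotating the word
   by one block adds 1 to every letter.  In a uniform word alternation is invariant under cyclic
   rotation (an alternating word with equally many a's and b's starts and ends with different
   letters), so by this symmetry it suffices to decide, for 0 < d < 4x, whether 0 and d alternate.
   Their five positions are explicit, and they interleave exactly when d is one of 1, x, 2x, 3x,
   4x - 1, i.e. when 0 and d are adjacent in C_4x(1, x, 2x). *)

lemma hd_filter_neq_iff:
  assumes "Q c"
  shows "filter Q w = [] \<or> hd (filter Q w) \<noteq> c \<longleftrightarrow>
    (\<forall>q < length w. w ! q = c \<longrightarrow> (\<exists>l < q. Q (w ! l) \<and> w ! l \<noteq> c))"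
  using assms by (induction w) (simp_all add: All_less_Suc2 Ex_less_Suc2, blast)

lemma successively_neq_filter_iff:
  "successively (\<noteq>) (filter Q w) \<longleftrightarrow>
     (\<forall>q < length w. \<forall>p < q. w ! p = w ! q \<longrightarrow> Q (w ! q) \<longrightarrow>
        (\<exists>l < q. p < l \<and> Q (w ! l) \<and> w ! l \<noteq> w ! q))"
proof (induction w)
  case (Cons c w)
  show ?case
  proof (cases "Q c")
    case True
    have "successively (\<noteq>) (filter Q (c # w)) \<longleftrightarrow>
        (filter Q w = [] \<or> hd (filter Q w) \<noteq> c) \<and> successively (\<noteq>) (filter Q w)"
      using True by (cases "filter Q w") auto
    also have "\<dots> \<longleftrightarrow> (\<forall>q < length (c # w). \<forall>p < q.
        (c # w) ! p = (c # w) ! q \<longrightarrow> Q ((c # w) ! q) \<longrightarrow>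
        (\<exists>l < q. p < l \<and> Q ((c # w) ! l) \<and> (c # w) ! l \<noteq> (c # w) ! q))"
      unfolding hd_filter_neq_iff[of Q, OF True] Cons.IH
      using True by (auto simp: All_less_Suc2 Ex_less_Suc2)
    finally show ?thesis .
  next
    case False
    then show ?thesis
      using Cons.IH by (auto simp: All_less_Suc2 Ex_less_Suc2)
  qed
qed simp

lemma alternates_iff_successively:
  "alternates w a b \<longleftrightarrow> successively (\<noteq>) (filter (\<lambda>z. z = a \<or> z = b) w)"
  unfolding alternates_def Let_def successively_conv_nth ..

definition positions :: "'a list \<Rightarrow> 'a \<Rightarrow> nat set" where
  "positions w a = {p. p < length w \<and> w ! p = a}"

definition interleaved :: "nat set \<Rightarrow> nat set \<Rightarrow> bool" where
  "interleaved A B \<longleftrightarrow> (\<forall>p\<in>A. \<forall>q\<in>A. p < q \<longrightarrow> (\<exists>l\<in>B. p < l \<and> l < q))"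

lemma alternates_iff_interleaved:
  assumes "a \<noteq> b"
  shows "alternates w a b \<longleftrightarrow>
    interleaved (positions w a) (positions w b) \<and> interleaved (positions w b) (positions w a)"
  unfolding alternates_iff_successively successively_neq_filter_iff interleaved_def positions_def
  using assms by auto (metis less_trans)+

lemma count_list_eq_card_positions: "count_list w a = card (positions w a)"
  unfolding count_list_eq_length_filter length_filter_conv_card positions_def by metis

lemma positions_map:
  assumes "inj_on f (insert a (set w))"
  shows "positions (map f w) (f a) = positions w a"
  using assms unfolding positions_def by (auto simp: inj_on_def)

lemma alternates_map:
  assumes "inj_on f (insert a (insert b (set w)))" "a \<noteq> b"
  shows "alternates (map f w) (f a) (f b) \<longleftrightarrow> alternates w a b"
proof -
  have "f a \<noteq> f b" using assms by (auto simp: inj_on_eq_iff)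
  moreover have "positions (map f w) (f a) = positions w a"
    and "positions (map f w) (f b) = positions w b"
    using assms by (auto intro!: positions_map elim: inj_on_subset)
  ultimately show ?thesis using alternates_iff_interleaved assms(2) by metis
qed

lemma count_list_hd_alternating:
  assumes "successively (\<noteq>) u" "set u \<subseteq> {a, b}" "a \<noteq> b" "u \<noteq> []" "hd u = a" "last u = a"
  shows "count_list u a = Suc (count_list u b)"
  using assms
proof (induction u rule: induct_list012)
  case (3 x y zs)
  then have "y = b" "zs \<noteq> []" by auto
  moreover have "hd zs \<in> {a, b}"
    using 3 hd_in_set[OF \<open>zs \<noteq> []\<close>] by auto
  ultimately have "hd zs = a" "last zs = a"
    using 3 by (auto simp: successively_Cons)
  with 3 \<open>zs \<noteq> []\<close> have "count_list zs a = Suc (count_list zs b)"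
    by (auto simp: successively_Cons)
  with 3 \<open>y = b\<close> show ?case by simp
qed auto

lemma hd_neq_last_alternating:
  assumes "successively (\<noteq>) u" "set u \<subseteq> {a, b}" "a \<noteq> b" "u \<noteq> []"
    and "count_list u a = count_list u b"
  shows "hd u \<noteq> last u"
proof
  assume "hd u = last u"
  moreover have "hd u = a \<or> hd u = b" using assms(2,4) hd_in_set by blast
  ultimately show False
    using count_list_hd_alternating[OF assms(1,2,3,4)] count_list_hd_alternating[of u b a] assms by auto
qed

lemma successively_rotate1_alternating:
  assumes "set u \<subseteq> {a, b}" "a \<noteq> b" "count_list u a = count_list u b"
  shows "successively (\<noteq>) (rotate1 u) \<longleftrightarrow> successively (\<noteq>) u"
proof (cases u)
  case (Cons c v)
  have "v \<noteq> []" using assms Cons by auto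
  have "hd (v @ [c]) \<noteq> last (v @ [c])" if "successively (\<noteq>) (v @ [c])"
    using hd_neq_last_alternating[OF that, of a b] assms Cons by auto
  moreover have "hd (c # v) \<noteq> last (c # v)" if "successively (\<noteq>) (c # v)"
    using hd_neq_last_alternating[OF that, of a b] assms Cons by auto
  ultimately show ?thesis
    using Cons \<open>v \<noteq> []\<close> by (auto simp: successively_Cons successively_append_iff)
qed simp

lemma count_list_rotate: "count_list (rotate n w) a = count_list w a"
proof -
  have "count_list (rotate1 u) a = count_list u a" for u :: "'a list"
    by (cases u) auto
  then show ?thesis by (induction n) auto
qed

lemma count_list_filter: "Q a \<Longrightarrow> count_list (filter Q w) a = count_list w a"
  by (induction w) auto

lemma alternates_rotate1:
  assumes "a \<noteq> b" "count_list w a = count_list w b"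
  shows "alternates (rotate1 w) a b \<longleftrightarrow> alternates w a b"
proof (cases w)
  case (Cons c v)
  let ?Q = "\<lambda>z. z = a \<or> z = b"
  have "successively (\<noteq>) (rotate1 (filter ?Q w)) \<longleftrightarrow> successively (\<noteq>) (filter ?Q w)"
    using assms by (intro successively_rotate1_alternating[of _ a b]) (auto simp: count_list_filter)
  then show ?thesis
    unfolding alternates_iff_successively using Cons by (cases "?Q c") auto
qed simp

lemma alternates_rotate:
  assumes "a \<noteq> b" "count_list w a = count_list w b"
  shows "alternates (rotate n w) a b \<longleftrightarrow> alternates w a b"
  by (induction n) (simp_all add: alternates_rotate1 count_list_rotate assms)

lemma add_diff_mod_eq:
  fixes a b m :: nat
  assumes "a < m" "b < m"
  shows "(b + m - a) mod m = (if a \<le> b then b - a else m - (a - b))"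
  using assms by (cases "a \<le> b") (simp_all add: le_mod_geq)

lemma circ_adj_translate:
  assumes "a < m" "b < m"
  shows "circ_adj m R a b \<longleftrightarrow> circ_adj m R 0 ((b + m - a) mod m)"
  using assms by (auto simp: add_diff_mod_eq circ_adj_def min.commute less_imp_diff_less)

lemma inj_on_add_mod:
  fixes a m :: nat
  assumes "a \<le> m"
  shows "inj_on (\<lambda>v. (v + a) mod m) {0..<m}"
proof (rule inj_on_inverseI[where g = "\<lambda>v. (v + (m - a)) mod m"])
  fix v assume "v \<in> {0..<m}"
  have "((v + a) mod m + (m - a)) mod m = (v + a + (m - a)) mod m"
    by (rule mod_add_left_eq)
  also have "v + a + (m - a) = v + m" using assms by simp
  finally show "((v + a) mod m + (m - a)) mod m = v" using \<open>v \<in> {0..<m}\<close> by simp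
qed

lemma mod_add_eq_iff:
  fixes u a m :: nat
  assumes "u < m" "a < m" "(s + r) mod m = 0"
  shows "(u + s) mod m = a \<longleftrightarrow> u = (a + r) mod m"
proof
  assume "(u + s) mod m = a"
  then have "(a + r) mod m = (u + (s + r)) mod m" by (metis mod_add_left_eq add.assoc)
  also have "\<dots> = u" using assms by (metis mod_add_right_eq add_0_right mod_less)
  finally show "u = (a + r) mod m" ..
next
  assume "u = (a + r) mod m"
  then have "(u + s) mod m = (a + (s + r)) mod m" by (metis mod_add_left_eq add.assoc add.commute)
  also have "\<dots> = a" using assms by (metis mod_add_right_eq add_0_right mod_less)
  finally show "(u + s) mod m = a" .
qed

definition block_offsets :: "nat \<Rightarrow> nat list" where
  "block_offsets x = [0, x, 2 * x, 4 * x - 1, 3 * x]"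

(* Position of slot t of block u.  Comparing positions blockwise (slot_less_slot) rather than as
   plain numbers keeps the case analysis in alternates_rep_word_zero cheap for presburger. *)
definition slot :: "nat \<Rightarrow> nat \<Rightarrow> nat" where
  "slot u t = 5 * u + t"

lemma slot_less_slot:
  "t < 5 \<Longrightarrow> s < 5 \<Longrightarrow> slot u t < slot v s \<longleftrightarrow> u < v \<or> u = v \<and> t < s"
  unfolding slot_def by presburger

definition rep_word :: "nat \<Rightarrow> nat list" where
  "rep_word x = map (\<lambda>p. (p div 5 + block_offsets x ! (p mod 5)) mod (4 * x)) [0..<20 * x]"

lemma length_rep_word: "length (rep_word x) = 20 * x"
  by (simp add: rep_word_def)

lemma nth_rep_word:
  "p < 20 * x \<Longrightarrow> rep_word x ! p = (p div 5 + block_offsets x ! (p mod 5)) mod (4 * x)"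
  by (simp add: rep_word_def)

(* The list [0, 3x, 2x, 1, x] is block_offsets negated mod 4x: letter a sits in slot t of
   block a - block_offsets x ! t. *)
lemma positions_rep_word:
  assumes "1 \<le> x" "a < 4 * x"
  shows "positions (rep_word x) a =
    (\<lambda>t. slot ((a + [0, 3 * x, 2 * x, 1, x] ! t) mod (4 * x)) t) ` {..<5}"
proof -
  let ?c = "[0, 3 * x, 2 * x, 1, x]"
  have "p \<in> positions (rep_word x) a \<longleftrightarrow> (\<exists>t < 5. p = slot ((a + ?c ! t) mod (4 * x)) t)" for p
  proof -
    define u t where "u = p div 5" and "t = p mod 5"
    then have "t < 5" by simp
    then have "t = 0 \<or> t = 1 \<or> t = 2 \<or> t = 3 \<or> t = 4" by auto
    then have offs: "(block_offsets x ! t + ?c ! t) mod (4 * x) = 0"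
      using assms by (elim disjE) (simp_all add: block_offsets_def)
    have "p \<in> positions (rep_word x) a \<longleftrightarrow> u < 4 * x \<and> (u + block_offsets x ! t) mod (4 * x) = a"
      unfolding u_def t_def by (auto simp: positions_def length_rep_word nth_rep_word)
    also have "\<dots> \<longleftrightarrow> u = (a + ?c ! t) mod (4 * x)"
    proof (cases "u < 4 * x")
      case True
      then show ?thesis using mod_add_eq_iff[OF True assms(2) offs] by simp
    next
      case False
      then show ?thesis using assms(1) by auto
    qed
    also have "\<dots> \<longleftrightarrow> (\<exists>t' < 5. p = slot ((a + ?c ! t') mod (4 * x)) t')"
    proof
      assume "u = (a + ?c ! t) mod (4 * x)"
      then show "\<exists>t' < 5. p = slot ((a + ?c ! t') mod (4 * x)) t'"
        using \<open>t < 5\<close> unfolding u_def t_def slot_def by (metis div_mult_mod_eq mult.commute)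
    next
      assume "\<exists>t' < 5. p = slot ((a + ?c ! t') mod (4 * x)) t'"
      then show "u = (a + ?c ! t) mod (4 * x)"
        unfolding u_def t_def slot_def by auto
    qed
    finally show ?thesis .
  qed
  then show ?thesis by blast
qed

lemma positions_rep_word_explicit:
  assumes "1 \<le> x" "a < 4 * x"
  shows "positions (rep_word x) a = {slot a 0, slot ((a + 3 * x) mod (4 * x)) 1,
    slot ((a + 2 * x) mod (4 * x)) 2, slot ((a + 1) mod (4 * x)) 3, slot ((a + x) mod (4 * x)) 4}"
  using assms by (simp add: positions_rep_word lessThan_nat_numeral lessThan_Suc insert_commute)

lemma set_rep_word: "set (rep_word x) = {0..<4 * x}"
proof
  show "set (rep_word x) \<subseteq> {0..<4 * x}"
    by (auto simp: rep_word_def)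
  show "{0..<4 * x} \<subseteq> set (rep_word x)"
  proof
    fix a assume "a \<in> {0..<4 * x}"
    then have "rep_word x ! (5 * a) = a" "5 * a < length (rep_word x)"
      by (auto simp: nth_rep_word length_rep_word block_offsets_def)
    then show "a \<in> set (rep_word x)" by (metis nth_mem)
  qed
qed

lemma count_list_rep_word:
  assumes "1 \<le> x" "a < 4 * x"
  shows "count_list (rep_word x) a = 5"
proof -
  have "inj_on (\<lambda>t. slot ((a + [0, 3 * x, 2 * x, 1, x] ! t) mod (4 * x)) t) {..<5}"
    by (rule inj_on_inverseI[where g = "\<lambda>p. p mod 5"]) (simp add: slot_def)
  then show ?thesis
    unfolding count_list_eq_card_positions positions_rep_word[OF assms] by (simp add: card_image)
qed

lemma rotate_rep_word:
  "rotate (5 * k) (rep_word x) = map (\<lambda>v. (v + k) mod (4 * x)) (rep_word x)"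
proof (rule nth_equalityI)
  fix i assume "i < length (rotate (5 * k) (rep_word x))"
  then have i: "i < 20 * x" by (simp add: length_rep_word)
  define j where "j = 5 * ((k + i div 5) mod (4 * x)) + i mod 5"
  have "(5 * k + i) mod (20 * x) = j"
    using mod_mult2_eq[of "5 * k + i" 5 "4 * x"] unfolding j_def by simp
  moreover have "(k + i div 5) mod (4 * x) < 4 * x" "i mod 5 < 5"
    using i by simp_all
  then have "j < 20 * x" "j div 5 = (k + i div 5) mod (4 * x)" "j mod 5 = i mod 5"
    unfolding j_def by linarith simp_all
  ultimately have "rotate (5 * k) (rep_word x) ! i =
      ((k + i div 5) mod (4 * x) + block_offsets x ! (i mod 5)) mod (4 * x)"
    using i by (simp add: nth_rotate length_rep_word nth_rep_word)
  also have "\<dots> = map (\<lambda>v. (v + k) mod (4 * x)) (rep_word x) ! i"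
    using i by (simp add: length_rep_word nth_rep_word mod_simps ac_simps)
  finally show "rotate (5 * k) (rep_word x) ! i =
      map (\<lambda>v. (v + k) mod (4 * x)) (rep_word x) ! i" .
qed (simp add: length_rep_word)

lemma alternates_rep_word_translate:
  assumes "1 \<le> x" "a < 4 * x" "b < 4 * x" "a \<noteq> b"
  shows "alternates (rep_word x) a b \<longleftrightarrow> alternates (rep_word x) 0 ((b + 4 * x - a) mod (4 * x))"
proof -
  define s where "s v = (v + a) mod (4 * x)" for v
  define d where "d = (b + 4 * x - a) mod (4 * x)"
  have "s 0 = a" "s d = b"
    using assms by (auto simp: s_def d_def mod_simps)
  then have "0 \<noteq> d" using assms(4) by metis
  have "insert 0 (insert d (set (rep_word x))) \<subseteq> {0..<4 * x}"
    using assms(1) by (auto simp: d_def set_rep_word)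
  with inj_on_add_mod[of a "4 * x"] have inj: "inj_on s (insert 0 (insert d (set (rep_word x))))"
    unfolding s_def using assms(2) by (metis inj_on_subset less_imp_le_nat)
  have "count_list (rep_word x) a = count_list (rep_word x) b"
    using assms by (simp add: count_list_rep_word)
  then have "alternates (rep_word x) a b \<longleftrightarrow> alternates (rotate (5 * a) (rep_word x)) a b"
    using alternates_rotate[OF assms(4)] by simp
  also have "rotate (5 * a) (rep_word x) = map s (rep_word x)"
    unfolding rotate_rep_word s_def[abs_def] ..
  also have "alternates (map s (rep_word x)) a b \<longleftrightarrow> alternates (rep_word x) 0 d"
    using alternates_map[OF inj \<open>0 \<noteq> d\<close>] \<open>s 0 = a\<close> \<open>s d = b\<close> by simp
  finally show ?thesis unfolding d_def .
qed

lemma alternates_rep_word_zero: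
  assumes "2 \<le> x" "0 < d" "d < 4 * x"
  shows "alternates (rep_word x) 0 d \<longleftrightarrow> d \<in> {1, x, 2 * x, 3 * x, 4 * x - 1}"
proof -
  note interleaving = alternates_iff_interleaved positions_rep_word_explicit interleaved_def
    slot_less_slot le_mod_geq
  obtain q e where d: "d = q * x + e" and "e < x" "q < 4"
  proof
    show "d = d div x * x + d mod x" by simp
    show "d mod x < x" using assms(1) by simp
    show "d div x < 4" using assms(3) by (simp add: less_mult_imp_div_less)
  qed
  then consider "q = 0" | "q = 1" | "q = 2" | "q = 3" "e + 1 < x" | "q = 3" "e + 1 = x"
    by atomize_elim presburger
  then show ?thesis
  proof cases
    case 1
    show ?thesis using assms(1,2) \<open>e < x\<close> unfolding d 1 by (simp add: interleaving; presburger)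
  next
    case 2
    show ?thesis using assms(1) \<open>e < x\<close> unfolding d 2 by (simp add: interleaving; presburger)
  next
    case 3
    show ?thesis using assms(1) \<open>e < x\<close> unfolding d 3 by (simp add: interleaving; presburger)
  next
    case 4
    show ?thesis using assms(1) 4(2) unfolding d 4(1) by (simp add: interleaving; presburger)
  next
    case 5
    show ?thesis using assms(1) 5(2) unfolding d 5(1) by (simp add: interleaving; presburger)
  qed
qed

lemma alternates_rep_word_iff_circ_adj:
  assumes "2 \<le> x" "a < 4 * x" "b < 4 * x" "a \<noteq> b"
  shows "alternates (rep_word x) a b \<longleftrightarrow> circ_adj (4 * x) {1, x, 2 * x} a b"
proof -
  define d where "d = (b + 4 * x - a) mod (4 * x)"
  have "0 < d" "d < 4 * x"
    using assms by (auto simp: d_def add_diff_mod_eq)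
  have "alternates (rep_word x) a b \<longleftrightarrow> alternates (rep_word x) 0 d"
    unfolding d_def using assms by (simp add: alternates_rep_word_translate)
  also have "\<dots> \<longleftrightarrow> d \<in> {1, x, 2 * x, 3 * x, 4 * x - 1}"
    using assms(1) \<open>0 < d\<close> \<open>d < 4 * x\<close> by (rule alternates_rep_word_zero)
  also have "\<dots> \<longleftrightarrow> circ_adj (4 * x) {1, x, 2 * x} 0 d"
    using \<open>0 < d\<close> \<open>d < 4 * x\<close> by (auto simp: circ_adj_def min_def)
  also have "\<dots> \<longleftrightarrow> circ_adj (4 * x) {1, x, 2 * x} a b"
    unfolding d_def using circ_adj_translate[OF assms(2,3)] by simp
  finally show ?thesis .
qed

lemma k_representable_imp_rep_number_le:
  assumes "k_representable k V E"
  shows "word_representable V E" "rep_number V E \<le> k"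
  using assms unfolding k_representable_def word_representable_def rep_number_def
  by (blast, rule Least_le)

theorem theorem28:
  fixes n x :: nat
  assumes "1 < x" and "x < n" and "2 * x = n"
  shows "word_representable (circ_vertices (2 * n)) (circ_adj (2 * n) {1, x, n})
       \<and> rep_number (circ_vertices (2 * n)) (circ_adj (2 * n) {1, x, n}) \<le> 5"
proof -
  have "2 \<le> x" using assms(1) by simp
  then have "represents {0..<4 * x} (circ_adj (4 * x) {1, x, 2 * x}) (rep_word x)"
    unfolding represents_def by (auto simp: set_rep_word alternates_rep_word_iff_circ_adj)
  moreover have "k_uniform 5 (rep_word x)"
    unfolding k_uniform_def set_rep_word using \<open>2 \<le> x\<close> by (simp add: count_list_rep_word)
  ultimately have "k_representable 5 (circ_vertices (4 * x)) (circ_adj (4 * x) {1, x, 2 * x})"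
    unfolding k_representable_def circ_vertices_def by blast
  then show ?thesis
    unfolding assms(3)[symmetric] by (simp add: k_representable_imp_rep_number_le)
qed

end
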